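(* Suppose that for some $k\ge1$, $\mathbb{E}_\theta Z^k<\infty$ where $Z\sim\theta$. Let $\pi_n$ be the unique stationary distribution of the gap process and let $\mathbb{E}_{\pi_n}$ denote expectation when $\mathbf{Y}(0)\sim\pi_n$. Then for every $i=1,\dots,n-1$ and every $t\ge0$, $\mathbb{E}_{\pi_n}[Y_i(t)^{k+1}]<\infty$.
   Context: Fix $n\ge 2$ and a probability law $\theta$ on $(0,\infty)$ with $\int z\,\theta(dz)=1$. The $n$-particle Stochastic Follow-the-Leader system $\mathbf{X}=(X_1,\dots,X_n)$ on $\mathbb{R}$, with $X_n(t)<\dots<X_1(t)$, evolves as a pure jump Markov process: the leader $X_1$ jumps forward at rate $1$ with i.i.d. jump sizes of law $\theta$; for $i\ge 2$, particle $X_i$ jumps at rate $X_{i-1}-X_i$ to a location chosen uniformly in $(X_i,X_{i-1})$. The gap process $\mathbf{Y}=(Y_1,\dots,Y_{n-1})$, $Y_i=X_i-X_{i+1}$, is a Markov process on $\mathbb{R}_+^{n-1}$ with generator $$\mathcal{L}_nf(\mathbf{y})=y_{n-1}\mathbb{E}_U[f(\mathbf{y}-y_{n-1}Ue_{n-1})-f(\mathbf{y})]+\sum_{i=1}^{n-2}y_i\mathbb{E}_U[f(\mathbf{y}+y_iU(e_{i+1}-e_i))-f(\mathbf{y})]+\mathbb{E}_\theta[f(\mathbf{y}+Ze_1)-f(\mathbf{y})],$$ $U\sim\mathrm{U}(0,1)$, and has a unique stationary distribution $\pi_n$. *)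

theory Defs
  imports "HOL-Probability.Probability"
begin

text \<open>Gap configurations \<open>y = (y_1,...,y_{n-1})\<close> are represented as functions
  \<open>nat \<Rightarrow> real\<close> on the index set \<open>{1..<n}\<close> (extensional, as in \<open>PiM\<close>).\<close>

definition gap_space :: "nat \<Rightarrow> (nat \<Rightarrow> real) measure" where
  "gap_space n = PiM {1..<n} (\<lambda>_. borel)"

text \<open>The generator \<open>L_n\<close> of the gap process; \<open>U\<close> uniform on (0,1), \<open>Z\<close> with law \<open>\<theta>\<close>.\<close>

definition sfl_gen ::
  "nat \<Rightarrow> real measure \<Rightarrow> ((nat \<Rightarrow> real) \<Rightarrow> real) \<Rightarrow> (nat \<Rightarrow> real) \<Rightarrow> real" where
  "sfl_gen n \<theta> f y =
     y (n - 1) * (LBINT u=0..1. f (y((n - 1) := y (n - 1) - y (n - 1) * u)) - f y)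
   + (\<Sum>i\<in>{1..n - 2}. y i * (LBINT u=0..1.
        f (y(i := y i - y i * u, Suc i := y (Suc i) + y i * u)) - f y))
   + (\<integral>z. f (y(1 := y 1 + z)) - f y \<partial>\<theta>)"

definition sfl_test_fun :: "nat \<Rightarrow> ((nat \<Rightarrow> real) \<Rightarrow> real) \<Rightarrow> bool" where
  "sfl_test_fun n f \<longleftrightarrow>
     f \<in> borel_measurable (gap_space n) \<and>
     (\<exists>B. \<forall>y. \<bar>f y\<bar> \<le> B) \<and>
     (\<exists>C. \<forall>y. (\<exists>i\<in>{1..<n}. \<bar>y i\<bar> > C) \<longrightarrow> f y = 0)"

definition sfl_stationary :: "nat \<Rightarrow> real measure \<Rightarrow> (nat \<Rightarrow> real) measure \<Rightarrow> bool" where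
  "sfl_stationary n \<theta> \<pi> \<longleftrightarrow>
     prob_space \<pi> \<and> sets \<pi> = sets (gap_space n) \<and>
     (AE y in \<pi>. \<forall>i\<in>{1..<n}. 0 \<le> y i) \<and>
     (\<forall>f. sfl_test_fun n f \<longrightarrow>
        integrable \<pi> (sfl_gen n \<theta> f) \<and> (\<integral>y. sfl_gen n \<theta> f y \<partial>\<pi>) = 0)"

end

theory Submission
  imports Defs
begin

text \<open>Let \<open>P = y\<^sub>1 + \<dots> + y\<^sub>i = X\<^sub>1 - X\<^sub>i\<^sub>+\<^sub>1\<close> and \<open>S = y\<^sub>1 + \<dots> + y\<^sub>n\<^sub>-\<^sub>1\<close>, and take
  \<open>f = min(P, A)\<^sup>m\<^sup>+\<^sup>1 - A\<^sup>m\<^sup>+\<^sup>1\<close> on \<open>{y \<ge> 0, S \<le> 2C}\<close> and \<open>f = 0\<close> elsewhere, a nonpositive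
  function that is nondecreasing in \<open>P\<close>. The jumps of particle \<open>i + 1\<close> lower \<open>P\<close> by \<open>y\<^sub>i U\<close>
  and contribute a drift of at most \<open>-y\<^sub>i\<^sup>m\<^sup>+\<^sup>2/(m+2)\<close> on \<open>{S \<le> A}\<close>; the leader's jumps raise
  \<open>P\<close> by \<open>Z\<close> and contribute at most \<open>(m+1) 2\<^sup>m (S\<^sup>m E Z + E Z\<^sup>m\<^sup>+\<^sup>1)\<close>, up to a loss at the
  cutoff of order \<open>A\<^sup>m\<^sup>+\<^sup>1 (\<pi>(S > C) + \<theta>(Z > C))\<close>; no other jump increases \<open>f\<close>. Letting
  \<open>C \<rightarrow> \<infinity>\<close> and then \<open>A \<rightarrow> \<infinity>\<close> bounds \<open>E\<^sub>\<pi> y\<^sub>i\<^sup>m\<^sup>+\<^sup>2\<close> by \<open>E\<^sub>\<pi> S\<^sup>m\<close> and \<open>E Z\<^sup>m\<^sup>+\<^sup>1\<close>, and induction on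
  \<open>m < k\<close> yields the moments of order \<open>k + 1\<close>.\<close>

lemma sum_fun_upd:
  fixes y :: "'a \<Rightarrow> 'b::ab_group_add"
  assumes "finite K"
  shows "(\<Sum>j\<in>K. (y(a := v)) j) = (\<Sum>j\<in>K. y j) + (if a \<in> K then v - y a else 0)"
proof (cases "a \<in> K")
  case True
  have "(\<Sum>j\<in>K - {a}. (y(a := v)) j) = (\<Sum>j\<in>K - {a}. y j)"
    by (rule sum.cong) auto
  then show ?thesis
    using True by (simp add: sum.remove[OF assms True] del: fun_upd_apply) simp
qed (auto intro!: sum.cong)

lemma power_Suc_diff_le:
  fixes x w :: real
  assumes "0 \<le> x" "x \<le> w"
  shows "w ^ Suc m - x ^ Suc m \<le> real (Suc m) * w ^ m * (w - x)"
proof (induction m)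
  case (Suc m)
  have "w ^ Suc (Suc m) - x ^ Suc (Suc m) = w * (w ^ Suc m - x ^ Suc m) + (w - x) * x ^ Suc m"
    by (simp add: algebra_simps)
  also have "\<dots> \<le> w * (real (Suc m) * w ^ m * (w - x)) + (w - x) * w ^ Suc m"
    using assms Suc by (intro add_mono mult_left_mono mult_right_mono power_mono) auto
  also have "\<dots> = real (Suc (Suc m)) * w ^ Suc m * (w - x)"
    by (simp add: algebra_simps)
  finally show ?case .
qed simp

lemma power_Suc_add_le:
  fixes x a :: real
  assumes "0 \<le> x" "0 \<le> a"
  shows "x ^ Suc m + a ^ Suc m \<le> (x + a) ^ Suc m"
proof (induction m)
  case (Suc m)
  have "x ^ Suc (Suc m) + a ^ Suc (Suc m) \<le> (x + a) * (x ^ Suc m + a ^ Suc m)"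
    using assms by (simp add: algebra_simps)
  also have "\<dots> \<le> (x + a) * (x + a) ^ Suc m"
    using assms Suc by (intro mult_left_mono) auto
  finally show ?case by simp
qed simp

lemma power_add_le_two_power:
  fixes s z :: real
  assumes "0 \<le> s" "0 \<le> z"
  shows "(s + z) ^ p \<le> 2 ^ p * (s ^ p + z ^ p)"
proof -
  have "(s + z) ^ p \<le> (2 * max s z) ^ p"
    using assms by (intro power_mono) auto
  also have "\<dots> = 2 ^ p * max s z ^ p"
    by (simp add: power_mult_distrib)
  also have "max s z ^ p \<le> s ^ p + z ^ p"
    using assms by (auto simp: max_def)
  finally show ?thesis by simp
qed

lemma sum_power_le_card_power:
  fixes a :: "'a \<Rightarrow> real"
  assumes "finite J" "J \<noteq> {}" "\<And>j. j \<in> J \<Longrightarrow> 0 \<le> a j"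
  shows "(\<Sum>j\<in>J. a j) ^ m \<le> real (card J) ^ m * (\<Sum>j\<in>J. a j ^ m)"
proof -
  have "Max (a ` J) \<in> a ` J"
    using assms by (intro Max_in) auto
  then obtain j0 where j0: "j0 \<in> J" "a j0 = Max (a ` J)"
    by (metis imageE)
  then have max: "a j \<le> a j0" if "j \<in> J" for j
    using assms that by simp
  have "(\<Sum>j\<in>J. a j) ^ m \<le> (real (card J) * a j0) ^ m"
    using assms max by (intro power_mono sum_bounded_above sum_nonneg) auto
  also have "\<dots> = real (card J) ^ m * a j0 ^ m"
    by (simp add: power_mult_distrib)
  also have "\<dots> \<le> real (card J) ^ m * (\<Sum>j\<in>J. a j ^ m)"
    using assms j0 by (intro mult_left_mono member_le_sum) auto
  finally show ?thesis .
qed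

lemma (in finite_measure) integrable_power_mono:
  fixes f :: "'a \<Rightarrow> real"
  assumes "integrable M (\<lambda>x. f x ^ q)" "p \<le> q"
    and [measurable]: "f \<in> borel_measurable M" and "AE x in M. 0 \<le> f x"
  shows "integrable M (\<lambda>x. f x ^ p)"
proof (rule Bochner_Integration.integrable_bound)
  show "integrable M (\<lambda>x. 1 + f x ^ q)"
    using assms(1) by simp
  show "AE x in M. norm (f x ^ p) \<le> norm (1 + f x ^ q)"
    using assms(4)
  proof eventually_elim
    case (elim x)
    have "f x ^ p \<le> 1 + f x ^ q"
    proof (cases "f x \<le> 1")
      case True
      then show ?thesis
        using elim power_le_one[of "f x" p] zero_le_power[of "f x" q] by linarith
    next
      case False
      then have "f x ^ p \<le> f x ^ q"
        by (intro power_increasing[OF assms(2)]) simp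
      then show ?thesis
        by simp
    qed
    then show ?case
      using elim by simp
  qed
qed simp

lemma integrable_sum_power:
  fixes f :: "'i \<Rightarrow> 'a \<Rightarrow> real"
  assumes "finite J" "J \<noteq> {}"
    and int: "\<And>j. j \<in> J \<Longrightarrow> integrable M (\<lambda>x. f j x ^ m)"
    and [measurable]: "\<And>j. j \<in> J \<Longrightarrow> f j \<in> borel_measurable M"
    and nonneg: "AE x in M. \<forall>j\<in>J. 0 \<le> f j x"
  shows "integrable M (\<lambda>x. (\<Sum>j\<in>J. f j x) ^ m)"
proof (rule Bochner_Integration.integrable_bound)
  show "integrable M (\<lambda>x. real (card J) ^ m * (\<Sum>j\<in>J. f j x ^ m))"
    using int by (intro integrable_mult_right Bochner_Integration.integrable_sum) auto
  show "AE x in M. norm ((\<Sum>j\<in>J. f j x) ^ m) \<le> norm (real (card J) ^ m * (\<Sum>j\<in>J. f j x ^ m))"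
    using nonneg
  proof eventually_elim
    case (elim x)
    have "0 \<le> (\<Sum>j\<in>J. f j x ^ m)"
      using elim by (intro sum_nonneg) auto
    then show ?case
      using sum_power_le_card_power[OF assms(1,2), of "\<lambda>j. f j x" m] elim
      by (simp add: sum_nonneg)
  qed
qed (use assms in measurable)

lemma integrable_of_truncations_bounded:
  fixes f w :: "'a \<Rightarrow> real"
  assumes [measurable]: "f \<in> borel_measurable M" "w \<in> borel_measurable M"
    and nonneg: "AE x in M. 0 \<le> f x"
    and int: "\<And>N::nat. integrable M (\<lambda>x. if w x \<le> real N then f x else 0)"
    and bound: "\<And>N::nat. (\<integral>x. (if w x \<le> real N then f x else 0) \<partial>M) \<le> K"
  shows "integrable M f"
proof (rule integrableI_nonneg[OF assms(1) nonneg])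
  define t where "t N x = ennreal (if w x \<le> real N then f x else 0)" for N x
  have "incseq t"
    by (auto simp: t_def incseq_def le_fun_def intro: ennreal_leI)
  have "(\<integral>\<^sup>+x. f x \<partial>M) = (\<integral>\<^sup>+x. (SUP N. t N x) \<partial>M)"
  proof (rule nn_integral_cong)
    fix x
    obtain N :: nat where "w x \<le> real N"
      using real_arch_simple by blast
    then have "ennreal (f x) \<le> (SUP N. t N x)"
      by (intro SUP_upper2[of N]) (auto simp: t_def)
    moreover have "(SUP N. t N x) \<le> ennreal (f x)"
      by (intro SUP_least) (auto simp: t_def intro: ennreal_leI)
    ultimately show "ennreal (f x) = (SUP N. t N x)"
      by (rule antisym)
  qed
  also have "\<dots> = (SUP N. \<integral>\<^sup>+x. t N x \<partial>M)"
    by (rule nn_integral_monotone_convergence_SUP[OF \<open>incseq t\<close>]) (unfold t_def, measurable)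
  also have "\<dots> \<le> ennreal K"
  proof (rule SUP_least)
    fix N
    have "AE x in M. 0 \<le> (if w x \<le> real N then f x else 0)"
      using nonneg by eventually_elim simp
    then have "(\<integral>\<^sup>+x. t N x \<partial>M) = ennreal (\<integral>x. (if w x \<le> real N then f x else 0) \<partial>M)"
      unfolding t_def by (rule nn_integral_eq_integral[OF int])
    then show "(\<integral>\<^sup>+x. t N x \<partial>M) \<le> ennreal K"
      using ennreal_leI[OF bound[of N]] by simp
  qed
  finally show "(\<integral>\<^sup>+x. f x \<partial>M) < \<infinity>"
    by (rule le_less_trans) simp
qed

lemma (in prob_space) measure_greater_tendsto_zero:
  fixes f :: "'a \<Rightarrow> real"
  assumes [measurable]: "f \<in> borel_measurable M"
  shows "(\<lambda>m. measure M {x \<in> space M. real m < f x}) \<longlonglongrightarrow> 0"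
proof -
  have "(\<lambda>m. measure M {x \<in> space M. real m < f x}) \<longlonglongrightarrow> measure M (\<Inter>m. {x \<in> space M. real m < f x})"
    by (rule finite_Lim_measure_decseq) (auto simp: decseq_def)
  moreover have "(\<Inter>m. {x \<in> space M. real m < f x}) = {}"
  proof (intro equalityI subsetI)
    fix x
    assume x: "x \<in> (\<Inter>m. {x \<in> space M. real m < f x})"
    obtain m :: nat where "f x \<le> real m"
      using real_arch_simple by blast
    moreover have "real m < f x"
      using x by blast
    ultimately show "x \<in> {}"
      by simp
  qed simp
  ultimately show ?thesis
    by simp
qed

lemma interval_integral_01_mono:
  fixes f g :: "real \<Rightarrow> real"
  assumes "f \<in> borel_measurable borel" "g \<in> borel_measurable borel"
    and "\<And>u. u \<in> {0..1} \<Longrightarrow> \<bar>f u\<bar> \<le> K" "\<And>u. u \<in> {0..1} \<Longrightarrow> \<bar>g u\<bar> \<le> K"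
    and "\<And>u. u \<in> {0..1} \<Longrightarrow> f u \<le> g u"
  shows "(LBINT u=0..1. f u) \<le> (LBINT u=0..1. g u)"
proof -
  let ?U = "restrict_space lborel {0..1::real}"
  interpret U: prob_space ?U
    by (rule prob_space_restrict_space) auto
  have space_U: "space ?U = {0..1}"
    by (simp add: space_restrict_space)
  have LBINT_eq: "(LBINT u=0..1. h u) = integral\<^sup>L ?U h" for h :: "real \<Rightarrow> real"
  proof -
    have "(LBINT u=ereal 0..ereal 1. h u) = (LBINT u:{0..1}. h u)"
      by (rule interval_integral_Icc) simp
    also have "\<dots> = integral\<^sup>L ?U h"
      unfolding set_lebesgue_integral_def by (subst integral_restrict_space) auto
    finally show ?thesis
      by (simp add: zero_ereal_def one_ereal_def)
  qed
  have integrable: "integrable ?U h"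
    if "h \<in> borel_measurable borel" "\<And>u. u \<in> {0..1} \<Longrightarrow> \<bar>h u\<bar> \<le> K" for h
  proof (rule U.integrable_const_bound[where B=K])
    show "h \<in> borel_measurable ?U"
      by (rule measurable_restrict_space1) (use that(1) in simp)
  qed (use that(2) in \<open>auto simp: space_U\<close>)
  show ?thesis
    unfolding LBINT_eq
  proof (rule integral_mono)
    show "integrable ?U f" "integrable ?U g"
      using assms(1-4) by (blast intro: integrable)+
  qed (use assms(5) in \<open>simp add: space_U\<close>)
qed

lemma interval_integral_01_power: "(LBINT u=0..1. u ^ m) = 1 / (real m + 1)"
proof -
  have "(LBINT u=ereal 0..ereal 1. u ^ m) = (LBINT u:{0..1}. u ^ m)"
    by (rule interval_integral_Icc) simp
  also have "\<dots> = (\<integral>u. u ^ m * indicator {0..1} u \<partial>lborel)"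
    unfolding set_lebesgue_integral_def by (simp add: mult.commute)
  also have "\<dots> = 1 / (real m + 1)"
    using integral_power[of 0 1 m] by (simp add: add.commute)
  finally show ?thesis
    by (simp add: zero_ereal_def one_ereal_def)
qed

section \<open>Partial-sum test functions and the generator\<close>

definition gap_nonneg :: "nat \<Rightarrow> (nat \<Rightarrow> real) \<Rightarrow> bool" where
  "gap_nonneg n y \<longleftrightarrow> (\<forall>j\<in>{1..<n}. 0 \<le> y j)"

text \<open>With the gaps \<open>y\<^sub>j = X\<^sub>j - X\<^sub>j\<^sub>+\<^sub>1\<close>, \<open>gap_partial i y = X\<^sub>1 - X\<^sub>i\<^sub>+\<^sub>1\<close> and
  \<open>gap_total n y = X\<^sub>1 - X\<^sub>n\<close>.\<close>

definition gap_partial :: "nat \<Rightarrow> (nat \<Rightarrow> real) \<Rightarrow> real" where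
  "gap_partial i y = (\<Sum>j\<in>{1..i}. y j)"

definition gap_total :: "nat \<Rightarrow> (nat \<Rightarrow> real) \<Rightarrow> real" where
  "gap_total n y = (\<Sum>j\<in>{1..<n}. y j)"

definition partial_sum_test ::
  "nat \<Rightarrow> nat \<Rightarrow> real \<Rightarrow> (real \<Rightarrow> real) \<Rightarrow> (nat \<Rightarrow> real) \<Rightarrow> real" where
  "partial_sum_test n i C g y =
     (if gap_nonneg n y \<and> gap_total n y \<le> C then g (gap_partial i y) else 0)"

lemma gap_nonneg_measurable [measurable]: "Measurable.pred (gap_space n) (gap_nonneg n)"
  unfolding gap_nonneg_def gap_space_def by measurable

lemma gap_total_measurable [measurable]: "gap_total n \<in> borel_measurable (gap_space n)"
  unfolding gap_total_def gap_space_def by measurable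

lemma gap_component_measurable: "i \<in> {1..<n} \<Longrightarrow> (\<lambda>y. y i) \<in> borel_measurable (gap_space n)"
  unfolding gap_space_def by (rule measurable_component_singleton) auto

lemma gap_partial_measurable: "i < n \<Longrightarrow> gap_partial i \<in> borel_measurable (gap_space n)"
  unfolding gap_partial_def by (intro borel_measurable_sum gap_component_measurable) auto

lemma gap_total_fun_upd:
  "gap_total n (y(a := v)) = gap_total n y + (if a \<in> {1..<n} then v - y a else 0)"
  unfolding gap_total_def by (rule sum_fun_upd) simp

lemma gap_partial_fun_upd:
  "gap_partial i (y(a := v)) = gap_partial i y + (if a \<in> {1..i} then v - y a else 0)"
  unfolding gap_partial_def by (rule sum_fun_upd) simp

lemma gap_nonneg_bounds:
  assumes "gap_nonneg n y" "i \<in> {1..<n}"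
  shows "0 \<le> y i" "y i \<le> gap_partial i y" "gap_partial i y \<le> gap_total n y"
proof -
  have nonneg: "\<And>j. j \<in> {1..<n} \<Longrightarrow> 0 \<le> y j"
    using assms(1) unfolding gap_nonneg_def by auto
  show "0 \<le> y i"
    using nonneg assms(2) .
  show "y i \<le> gap_partial i y"
    unfolding gap_partial_def using assms(2) nonneg by (intro member_le_sum) auto
  show "gap_partial i y \<le> gap_total n y"
    unfolding gap_partial_def gap_total_def using assms(2) nonneg by (intro sum_mono2) auto
qed

lemma partial_sum_test_is_test_fun:
  assumes "i < n" and [measurable]: "g \<in> borel_measurable borel" and bound: "\<And>x. \<bar>g x\<bar> \<le> B"
  shows "sfl_test_fun n (partial_sum_test n i C g)"
  unfolding sfl_test_fun_def
proof (intro conjI)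
  note gap_partial_measurable[OF \<open>i < n\<close>, measurable]
  show "partial_sum_test n i C g \<in> borel_measurable (gap_space n)"
    unfolding partial_sum_test_def[abs_def] by measurable
  show "\<exists>B. \<forall>y. \<bar>partial_sum_test n i C g y\<bar> \<le> B"
    using bound by (intro exI[of _ "max B 0"]) (auto simp: partial_sum_test_def intro: le_max_iff_disj[THEN iffD2])
  show "\<exists>C'. \<forall>y. (\<exists>j\<in>{1..<n}. C' < \<bar>y j\<bar>) \<longrightarrow> partial_sum_test n i C g y = 0"
  proof (intro exI[of _ "\<bar>C\<bar>"] allI impI)
    fix y
    assume "\<exists>j\<in>{1..<n}. \<bar>C\<bar> < \<bar>y j\<bar>"
    then obtain j where j: "j \<in> {1..<n}" "\<bar>C\<bar> < \<bar>y j\<bar>"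
      by blast
    show "partial_sum_test n i C g y = 0"
    proof (cases "gap_nonneg n y")
      case True
      then have "C < gap_total n y"
        using j gap_nonneg_bounds[OF True j(1)] by linarith
      then show ?thesis
        by (simp add: partial_sum_test_def)
    qed (simp add: partial_sum_test_def)
  qed
qed

lemma partial_sum_test_leader_jump:
  assumes "i \<in> {1..<n}" "gap_nonneg n y"
  shows "partial_sum_test n i C g (y(1 := y 1 + z)) =
    (if 0 \<le> y 1 + z \<and> gap_total n y + z \<le> C then g (gap_partial i y + z) else 0)"
proof -
  have "gap_total n (y(1 := y 1 + z)) = gap_total n y + z"
    "gap_partial i (y(1 := y 1 + z)) = gap_partial i y + z"
    using assms(1) by (simp_all only: gap_total_fun_upd gap_partial_fun_upd) simp_all
  moreover have "gap_nonneg n (y(1 := y 1 + z)) \<longleftrightarrow> 0 \<le> y 1 + z"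
    using assms unfolding gap_nonneg_def by auto
  ultimately show ?thesis
    by (simp add: partial_sum_test_def)
qed

lemma partial_sum_test_transfer_jump:
  assumes "gap_nonneg n y" "j \<in> {1..n - 2}" "0 \<le> u" "u \<le> 1"
  shows "partial_sum_test n i C g (y(j := y j - y j * u, Suc j := y (Suc j) + y j * u))
      - partial_sum_test n i C g y
    = (if j = i \<and> gap_total n y \<le> C then g (gap_partial i y - y i * u) - g (gap_partial i y) else 0)"
proof -
  let ?y = "y(j := y j - y j * u, Suc j := y (Suc j) + y j * u)"
  have "gap_total n ?y = gap_total n y"
    using assms(2) by (simp only: gap_total_fun_upd) auto
  moreover have "gap_partial i ?y = gap_partial i y - (if j = i then y i * u else 0)"
    using assms(2) by (simp only: gap_partial_fun_upd) auto
  moreover have "gap_nonneg n ?y"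
    using assms mult_left_le[of u "y j"] unfolding gap_nonneg_def by auto
  ultimately show ?thesis
    using assms(1) unfolding partial_sum_test_def by (cases "j = i") simp_all
qed

lemma partial_sum_test_last_jump:
  assumes "n \<ge> 2" "i \<in> {1..<n}" "gap_nonneg n y" "0 \<le> u" "u \<le> 1"
  shows "partial_sum_test n i C g (y(n - 1 := y (n - 1) - y (n - 1) * u)) =
    (if gap_total n y - y (n - 1) * u \<le> C
     then g (gap_partial i y - (if i = n - 1 then y (n - 1) * u else 0)) else 0)"
proof -
  let ?y = "y(n - 1 := y (n - 1) - y (n - 1) * u)"
  have "gap_total n ?y = gap_total n y - y (n - 1) * u"
    using assms(1) by (simp only: gap_total_fun_upd) simp
  moreover have "gap_partial i ?y = gap_partial i y - (if i = n - 1 then y (n - 1) * u else 0)"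
    using assms(2) by (simp only: gap_partial_fun_upd) auto
  moreover have "gap_nonneg n ?y"
    using assms mult_left_le[of u "y (n - 1)"] unfolding gap_nonneg_def by auto
  ultimately show ?thesis
    by (simp add: partial_sum_test_def)
qed

lemma sfl_transfer_terms_eq:
  assumes "i \<in> {1..<n}" "gap_nonneg n y"
  shows "(\<Sum>j\<in>{1..n - 2}. y j * (LBINT u=0..1.
        partial_sum_test n i C g (y(j := y j - y j * u, Suc j := y (Suc j) + y j * u))
        - partial_sum_test n i C g y))
    = (if i \<le> n - 2 \<and> gap_total n y \<le> C
       then y i * (LBINT u=0..1. g (gap_partial i y - y i * u) - g (gap_partial i y)) else 0)"
proof -
  let ?D = "y i * (LBINT u=0..1. g (gap_partial i y - y i * u) - g (gap_partial i y))"
  have "y j * (LBINT u=0..1.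
        partial_sum_test n i C g (y(j := y j - y j * u, Suc j := y (Suc j) + y j * u))
        - partial_sum_test n i C g y)
      = (if j = i then if gap_total n y \<le> C then ?D else 0 else 0)"
    if j: "j \<in> {1..n - 2}" for j
  proof -
    have "(LBINT u=0..1.
        partial_sum_test n i C g (y(j := y j - y j * u, Suc j := y (Suc j) + y j * u))
        - partial_sum_test n i C g y)
      = (LBINT u=0..1. (if j = i \<and> gap_total n y \<le> C
          then g (gap_partial i y - y i * u) - g (gap_partial i y) else 0))"
      by (rule interval_integral_cong)
         (simp add: einterval_iff partial_sum_test_transfer_jump[OF assms(2) j])
    then show ?thesis
      by auto
  qed
  then show ?thesis
    using assms(1) by (simp add: sum.delta)
qed

lemma sfl_last_term_le:
  assumes "n \<ge> 2" "i \<in> {1..<n}" "gap_nonneg n y"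
    and [measurable]: "g \<in> borel_measurable borel"
    and g_bounds: "\<And>x. - B \<le> g x \<and> g x \<le> 0"
  shows "y (n - 1) * (LBINT u=0..1.
        partial_sum_test n i C g (y(n - 1 := y (n - 1) - y (n - 1) * u))
        - partial_sum_test n i C g y)
    \<le> (if i = n - 1 \<and> gap_total n y \<le> C
       then y i * (LBINT u=0..1. g (gap_partial i y - y i * u) - g (gap_partial i y)) else 0)"
proof -
  define S where "S = gap_total n y"
  define P where "P = gap_partial i y"
  define a where "a = y (n - 1)"
  define E where "E u = (if S - a * u \<le> C then g (P - (if i = n - 1 then a * u else 0)) else 0)
      - (if S \<le> C then g P else 0)" for u
  define D where "D u = (if i = n - 1 \<and> S \<le> C then g (P - a * u) - g P else 0)" for u
  have a_nonneg: "0 \<le> a"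
    using gap_nonneg_bounds(1)[OF assms(3), of "n - 1"] assms(1) by (simp add: a_def)
  have "(LBINT u=0..1. partial_sum_test n i C g (y(n - 1 := y (n - 1) - y (n - 1) * u))
        - partial_sum_test n i C g y) = (LBINT u=0..1. E u)"
    using partial_sum_test_last_jump[OF assms(1-3)] assms(3)
    by (intro interval_integral_cong)
       (auto simp: einterval_iff E_def S_def P_def a_def partial_sum_test_def)
  also have "\<dots> \<le> (LBINT u=0..1. D u)"
  proof (rule interval_integral_01_mono[where K="2 * B"])
    show "E \<in> borel_measurable borel" "D \<in> borel_measurable borel"
      unfolding E_def[abs_def] D_def[abs_def] by measurable
    show "\<bar>E u\<bar> \<le> 2 * B" for u
      using g_bounds[of "P - (if i = n - 1 then a * u else 0)"] g_bounds[of P] by (auto simp: E_def)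
    show "\<bar>D u\<bar> \<le> 2 * B" for u
      using g_bounds[of "P - a * u"] g_bounds[of P] by (auto simp: D_def)
    show "E u \<le> D u" if "u \<in> {0..1}" for u
    proof -
      have "0 \<le> a * u"
        using that a_nonneg by simp
      then show ?thesis
        using g_bounds[of "P - (if i = n - 1 then a * u else 0)"] unfolding E_def D_def by auto
    qed
  qed
  finally show ?thesis
    using a_nonneg unfolding D_def
    by (auto simp: S_def P_def a_def intro: mult_left_mono mult_nonneg_nonpos)
qed

lemma sfl_gen_partial_sum_test_le:
  assumes "n \<ge> 2" "i \<in> {1..<n}" "gap_nonneg n y"
    and "g \<in> borel_measurable borel" "\<And>x. - B \<le> g x \<and> g x \<le> 0"
  shows "sfl_gen n \<theta> (partial_sum_test n i C g) y
    \<le> (if gap_total n y \<le> C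
       then y i * (LBINT u=0..1. g (gap_partial i y - y i * u) - g (gap_partial i y)) else 0)
      + (\<integral>z. partial_sum_test n i C g (y(1 := y 1 + z)) - partial_sum_test n i C g y \<partial>\<theta>)"
proof -
  consider "i = n - 1" "\<not> i \<le> n - 2" | "i \<noteq> n - 1" "i \<le> n - 2"
    using assms(1,2) by fastforce
  then show ?thesis
    using sfl_last_term_le[OF assms, of C] sfl_transfer_terms_eq[OF assms(2,3), of C g]
    unfolding sfl_gen_def by cases auto
qed

text \<open>The cutoff sits at \<open>2C\<close> so that a jump leaving \<open>{S \<le> 2C}\<close> forces \<open>S > C\<close> or \<open>z > C\<close>.\<close>

lemma cutoff_increment_le:
  fixes g :: "real \<Rightarrow> real"
  assumes "mono g" and g_bounds: "\<And>x. - B \<le> g x \<and> g x \<le> 0"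
    and "0 \<le> z" and increment: "g (P + z) - g P \<le> \<phi>"
  shows "(if S + z \<le> 2 * C then g (P + z) else 0) - (if S \<le> 2 * C then g P else 0)
    \<le> \<phi> + B * indicator {C<..} S + B * indicator {C<..} z"
proof -
  have B: "0 \<le> B"
    using g_bounds[of 0] by linarith
  show ?thesis
  proof (cases "S + z \<le> 2 * C")
    case True
    have "0 \<le> B * indicator {C<..} S" "0 \<le> B * indicator {C<..} z"
      using B by simp_all
    then show ?thesis
      using True \<open>0 \<le> z\<close> increment by auto
  next
    case False
    then have "1 \<le> indicator {C<..} S + (indicator {C<..} z :: real)"
      by (auto simp: indicator_def)
    then have "B \<le> B * indicator {C<..} S + B * indicator {C<..} z"
      using mult_left_mono[OF _ B] by (fastforce simp: distrib_left[symmetric])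
    moreover have "0 \<le> \<phi>"
      using increment monoD[OF \<open>mono g\<close>, of P "P + z"] \<open>0 \<le> z\<close> by simp
    ultimately show ?thesis
      using False g_bounds[of P] by auto
  qed
qed

lemma sfl_leader_term_le:
  assumes "prob_space \<theta>" "sets \<theta> = sets borel" "AE z in \<theta>. 0 \<le> z" "integrable \<theta> \<phi>"
    and "i \<in> {1..<n}" "gap_nonneg n y"
    and [measurable]: "g \<in> borel_measurable borel" and "mono g"
    and g_bounds: "\<And>x. - B \<le> g x \<and> g x \<le> 0"
    and increment: "\<And>z. 0 \<le> z \<Longrightarrow> g (gap_partial i y + z) - g (gap_partial i y) \<le> \<phi> z"
  shows "(\<integral>z. partial_sum_test n i (2 * C) g (y(1 := y 1 + z)) - partial_sum_test n i (2 * C) g y \<partial>\<theta>)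
    \<le> integral\<^sup>L \<theta> \<phi> + B * (indicator {C<..} (gap_total n y) + measure \<theta> {C<..})"
proof -
  interpret \<theta>: prob_space \<theta>
    by fact
  define S where "S = gap_total n y"
  define P where "P = gap_partial i y"
  define G where "G z = (if 0 \<le> y 1 + z \<and> S + z \<le> 2 * C then g (P + z) else 0)
      - (if S \<le> 2 * C then g P else 0)" for z
  have y1: "0 \<le> y 1"
    using assms(5,6) unfolding gap_nonneg_def by auto
  have measurable_\<theta>: "borel_measurable \<theta> = borel_measurable borel"
    by (rule measurable_cong_sets) (use assms(2) in auto)
  have integrand: "partial_sum_test n i (2 * C) g (y(1 := y 1 + z)) - partial_sum_test n i (2 * C) g y = G z" for z
    using partial_sum_test_leader_jump[OF assms(5,6)] assms(6)
    by (simp add: G_def S_def P_def partial_sum_test_def)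
  have G_le: "G z \<le> \<phi> z + B * indicator {C<..} S + B * indicator {C<..} z" if "0 \<le> z" for z
  proof -
    have "G z = (if S + z \<le> 2 * C then g (P + z) else 0) - (if S \<le> 2 * C then g P else 0)"
      using y1 that by (simp add: G_def)
    then show ?thesis
      using cutoff_increment_le[OF \<open>mono g\<close> g_bounds that increment[OF that], where S=S and C=C]
      unfolding P_def by linarith
  qed
  have integrable_indicator: "integrable \<theta> (indicator {C<..} :: real \<Rightarrow> real)"
    by (rule \<theta>.integrable_const_bound[where B=1]) (auto simp: measurable_\<theta>)
  have "(\<integral>z. G z \<partial>\<theta>) \<le> (\<integral>z. \<phi> z + B * indicator {C<..} S + B * indicator {C<..} z \<partial>\<theta>)"
  proof (rule integral_mono_AE)
    show "integrable \<theta> G"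
    proof (rule \<theta>.integrable_const_bound[where B="2 * B"])
      have "\<bar>G z\<bar> \<le> 2 * B" for z
        using g_bounds[of P] g_bounds[of "P + z"] by (auto simp: G_def)
      then show "AE z in \<theta>. norm (G z) \<le> 2 * B"
        by simp
      show "G \<in> borel_measurable \<theta>"
        unfolding measurable_\<theta> G_def[abs_def] by measurable
    qed
    show "integrable \<theta> (\<lambda>z. \<phi> z + B * indicator {C<..} S + B * indicator {C<..} z)"
      using assms(4) integrable_indicator by simp
    show "AE z in \<theta>. G z \<le> \<phi> z + B * indicator {C<..} S + B * indicator {C<..} z"
      using assms(3) by eventually_elim (rule G_le)
  qed
  also have "\<dots> = integral\<^sup>L \<theta> \<phi> + B * (indicator {C<..} S + measure \<theta> {C<..})"
    using assms(2,4) integrable_indicator \<theta>.prob_space by (simp add: distrib_left)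
  finally show ?thesis
    unfolding integrand S_def .
qed

section \<open>Capped powers of the partial sums\<close>

definition capped_power :: "real \<Rightarrow> nat \<Rightarrow> real \<Rightarrow> real" where
  "capped_power A m x = max 0 (min x A) ^ m"

lemma capped_power_measurable [measurable]: "capped_power A m \<in> borel_measurable borel"
  unfolding capped_power_def[abs_def] by measurable

lemma capped_power_bounds: "0 \<le> A \<Longrightarrow> 0 \<le> capped_power A m x \<and> capped_power A m x \<le> A ^ m"
  unfolding capped_power_def by (auto intro!: power_mono)

lemma mono_capped_power: "mono (capped_power A m)"
  unfolding capped_power_def by (intro monoI power_mono) auto

lemma capped_power_eq: "0 \<le> x \<Longrightarrow> x \<le> A \<Longrightarrow> capped_power A m x = x ^ m"
  unfolding capped_power_def by simp

lemma capped_power_increment_le: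
  assumes "0 \<le> P" "P \<le> S" "0 \<le> z" "0 \<le> A"
  shows "capped_power A (Suc m) (P + z) - capped_power A (Suc m) P
    \<le> real (Suc m) * 2 ^ m * (S ^ m * z + z ^ Suc m)"
proof -
  let ?c = "\<lambda>t. max 0 (min t A)"
  have c: "0 \<le> ?c P" "?c P \<le> ?c (P + z)" "?c (P + z) - ?c P \<le> z" "?c (P + z) \<le> P + z"
    using assms by auto
  have "capped_power A (Suc m) (P + z) - capped_power A (Suc m) P
      \<le> real (Suc m) * ?c (P + z) ^ m * (?c (P + z) - ?c P)"
    unfolding capped_power_def by (rule power_Suc_diff_le) (use c in auto)
  also have "\<dots> \<le> real (Suc m) * (P + z) ^ m * z"
    using c by (intro mult_mono power_mono mult_left_mono) auto
  also have "\<dots> \<le> real (Suc m) * (2 ^ m * (S ^ m + z ^ m)) * z"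
  proof -
    have "(P + z) ^ m \<le> 2 ^ m * (P ^ m + z ^ m)"
      using power_add_le_two_power[of P z m] assms by simp
    also have "\<dots> \<le> 2 ^ m * (S ^ m + z ^ m)"
      using assms by (intro mult_left_mono add_right_mono power_mono) auto
    finally show ?thesis
      using assms(3) by (intro mult_right_mono mult_left_mono) auto
  qed
  also have "\<dots> = real (Suc m) * 2 ^ m * (S ^ m * z + z ^ Suc m)"
    by (simp add: algebra_simps)
  finally show ?thesis .
qed

lemma capped_power_sub_le:
  assumes "0 \<le> v" "v \<le> P" "P \<le> A"
  shows "capped_power A (Suc m) (P - v) - capped_power A (Suc m) P \<le> - (v ^ Suc m)"
proof -
  have "(P - v) ^ Suc m + v ^ Suc m \<le> (P - v + v) ^ Suc m"
    by (rule power_Suc_add_le) (use assms in auto)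
  then have "(P - v) ^ Suc m + v ^ Suc m \<le> P ^ Suc m"
    by (simp only: diff_add_cancel)
  moreover have "capped_power A (Suc m) (P - v) = (P - v) ^ Suc m"
    "capped_power A (Suc m) P = P ^ Suc m"
    using assms by (simp_all add: capped_power_eq)
  ultimately show ?thesis
    by linarith
qed

lemma capped_power_drain_le:
  assumes "0 \<le> b" "b \<le> P" "0 \<le> A"
  shows "b * (LBINT u=0..1. capped_power A (Suc m) (P - b * u) - capped_power A (Suc m) P)
    \<le> - (if P \<le> A then b ^ (m + 2) / (m + 2) else 0)"
proof -
  let ?c = "capped_power A (Suc m)"
  have bounded: "\<bar>?c (P - b * u) - ?c P\<bar> \<le> 2 * A ^ Suc m" for u
    using capped_power_bounds[OF assms(3), of "Suc m" "P - b * u"]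
      capped_power_bounds[OF assms(3), of "Suc m" P] by auto
  show ?thesis
  proof (cases "P \<le> A")
    case True
    have "(LBINT u=0..1. ?c (P - b * u) - ?c P) \<le> (LBINT u=0..1. - (b ^ Suc m * u ^ Suc m))"
    proof (rule interval_integral_01_mono[where K="2 * A ^ Suc m + b ^ Suc m"])
      show "\<bar>?c (P - b * u) - ?c P\<bar> \<le> 2 * A ^ Suc m + b ^ Suc m" for u
        using bounded[of u] zero_le_power[OF assms(1), of "Suc m"] by linarith
      show "\<bar>- (b ^ Suc m * u ^ Suc m)\<bar> \<le> 2 * A ^ Suc m + b ^ Suc m" if "u \<in> {0..1}" for u
      proof -
        have "0 \<le> b ^ Suc m * u ^ Suc m"
          using that assms(1) by simp
        moreover have "b ^ Suc m * u ^ Suc m \<le> b ^ Suc m"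
          using that assms(1) by (intro mult_left_le power_le_one) auto
        moreover have "0 \<le> A ^ Suc m"
          using assms(3) by simp
        ultimately show ?thesis
          by (simp only: abs_minus_cancel abs_of_nonneg)
      qed
      show "?c (P - b * u) - ?c P \<le> - (b ^ Suc m * u ^ Suc m)" if "u \<in> {0..1}" for u
      proof (rule capped_power_sub_le[of "b * u", unfolded power_mult_distrib])
        show "0 \<le> b * u"
          using that assms(1) by simp
        have "b * u \<le> b"
          using that assms(1) by (intro mult_left_le) auto
        then show "b * u \<le> P"
          using assms(2) by linarith
      qed (rule True)
    qed measurable
    also have "\<dots> = - (b ^ Suc m / (m + 2))"
      unfolding interval_lebesgue_integral_uminus interval_lebesgue_integral_mult_right
        interval_integral_01_power by simp
    finally have "b * (LBINT u=0..1. ?c (P - b * u) - ?c P) \<le> b * - (b ^ Suc m / (m + 2))"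
      using assms(1) by (rule mult_left_mono)
    then show ?thesis
      using True by (simp add: power_Suc2 mult.commute)
  next
    case False
    have "(LBINT u=0..1. ?c (P - b * u) - ?c P) \<le> (LBINT u=0..1. 0)"
    proof (rule interval_integral_01_mono[where K="2 * A ^ Suc m"])
      show "?c (P - b * u) - ?c P \<le> 0" if "u \<in> {0..1}" for u
        using that assms(1) monoD[OF mono_capped_power, of "P - b * u" P] by simp
      show "\<bar>?c (P - b * u) - ?c P\<bar> \<le> 2 * A ^ Suc m" for u
        by (rule bounded)
      show "\<bar>0 :: real\<bar> \<le> 2 * A ^ Suc m"
        using assms(3) by simp
    qed measurable
    then show ?thesis
      using False assms(1) by (simp add: mult_nonneg_nonpos)
  qed
qed

lemma sfl_gen_capped_test_le:
  assumes "prob_space \<theta>" "sets \<theta> = sets borel" "AE z in \<theta>. 0 \<le> z"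
    and "integrable \<theta> (\<lambda>z. z)" "integrable \<theta> (\<lambda>z. z ^ Suc m)"
    and "n \<ge> 2" "i \<in> {1..<n}" "gap_nonneg n y" "0 \<le> A" "A \<le> C"
  shows "sfl_gen n \<theta> (partial_sum_test n i (2 * C) (\<lambda>x. capped_power A (Suc m) x - A ^ Suc m)) y
    \<le> real (Suc m) * 2 ^ m * (gap_total n y ^ m * (\<integral>z. z \<partial>\<theta>) + (\<integral>z. z ^ Suc m \<partial>\<theta>))
      + A ^ Suc m * (indicator {C<..} (gap_total n y) + measure \<theta> {C<..})
      - (if gap_total n y \<le> A then y i ^ (m + 2) / (m + 2) else 0)"
proof -
  define g where "g x = capped_power A (Suc m) x - A ^ Suc m" for x
  define K where "K = real (Suc m) * 2 ^ m"
  define S where "S = gap_total n y"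
  define P where "P = gap_partial i y"
  note bounds = gap_nonneg_bounds[OF assms(8,7), folded S_def P_def]
  have g_measurable: "g \<in> borel_measurable borel"
    unfolding g_def by measurable
  have g_bounds: "- (A ^ Suc m) \<le> g x \<and> g x \<le> 0" for x
    using capped_power_bounds[OF assms(9), of "Suc m" x] by (simp add: g_def)
  have "mono g"
    using mono_capped_power by (auto simp: g_def mono_def)
  have drain: "(if S \<le> 2 * C then y i * (LBINT u=0..1. g (P - y i * u) - g P) else 0)
      \<le> - (if S \<le> A then y i ^ (m + 2) / (m + 2) else 0)"
  proof (cases "S \<le> 2 * C")
    case True
    have "y i * (LBINT u=0..1. g (P - y i * u) - g P) \<le> - (if P \<le> A then y i ^ (m + 2) / (m + 2) else 0)"
      using capped_power_drain_le[of "y i" P A m] bounds assms(9) by (simp add: g_def)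
    also have "\<dots> \<le> - (if S \<le> A then y i ^ (m + 2) / (m + 2) else 0)"
      using bounds by auto
    finally show ?thesis
      using True by simp
  qed (use assms(9,10) in auto)
  have increment: "g (P + z) - g P \<le> K * (S ^ m * z + z ^ Suc m)" if "0 \<le> z" for z
    using capped_power_increment_le[of P S z A m] bounds that assms(9) by (simp add: g_def K_def)
  have leader: "(\<integral>z. partial_sum_test n i (2 * C) g (y(1 := y 1 + z)) - partial_sum_test n i (2 * C) g y \<partial>\<theta>)
      \<le> K * (S ^ m * (\<integral>z. z \<partial>\<theta>) + (\<integral>z. z ^ Suc m \<partial>\<theta>))
        + A ^ Suc m * (indicator {C<..} S + measure \<theta> {C<..})"
    using sfl_leader_term_le[OF assms(1-3) _ assms(7,8) g_measurable \<open>mono g\<close> g_bounds,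
        of "\<lambda>z. K * (S ^ m * z + z ^ Suc m)" C] increment assms(4,5)
    by (simp add: S_def P_def)
  show ?thesis
    using sfl_gen_partial_sum_test_le[OF assms(6-8) g_measurable g_bounds, of \<theta> "2 * C"] drain leader
    unfolding g_def[symmetric] K_def[symmetric] S_def[symmetric] P_def[symmetric] by linarith
qed

section \<open>Moments of a stationary law\<close>

locale sfl_stationary_law =
  fixes n :: nat and \<theta> :: "real measure" and \<pi> :: "(nat \<Rightarrow> real) measure"
  assumes n_ge_2: "n \<ge> 2"
    and prob_space_jump: "prob_space \<theta>" and sets_jump: "sets \<theta> = sets borel"
    and jump_nonneg: "AE z in \<theta>. 0 \<le> z" and integrable_jump: "integrable \<theta> (\<lambda>z. z)"
    and stationary: "sfl_stationary n \<theta> \<pi>"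
begin

sublocale \<pi>: prob_space \<pi>
  using stationary by (simp add: sfl_stationary_def)

sublocale \<theta>: prob_space \<theta>
  by (rule prob_space_jump)

lemma AE_gap_nonneg: "AE y in \<pi>. gap_nonneg n y"
  using stationary by (simp add: sfl_stationary_def gap_nonneg_def)

lemma borel_measurable_\<pi>: "borel_measurable \<pi> = borel_measurable (gap_space n)"
  using stationary by (intro measurable_cong_sets) (auto simp: sfl_stationary_def)

lemma borel_measurable_jump: "borel_measurable \<theta> = borel_measurable borel"
  using sets_jump by (intro measurable_cong_sets) auto

lemma gap_total_measurable_\<pi> [measurable]: "gap_total n \<in> borel_measurable \<pi>"
  unfolding borel_measurable_\<pi> by (rule gap_total_measurable)

lemma gap_component_measurable_\<pi>: "i \<in> {1..<n} \<Longrightarrow> (\<lambda>y. y i) \<in> borel_measurable \<pi>"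
  unfolding borel_measurable_\<pi> by (rule gap_component_measurable)

lemma integrable_jump_power:
  assumes "integrable \<theta> (\<lambda>z. z ^ k)" "m \<le> k"
  shows "integrable \<theta> (\<lambda>z. z ^ m)"
proof (rule \<theta>.integrable_power_mono[OF assms])
  show "(\<lambda>z. z) \<in> borel_measurable \<theta>"
    by (simp add: borel_measurable_jump)
qed (rule jump_nonneg)

lemma integrable_truncated_power:
  assumes i: "i \<in> {1..<n}"
  shows "integrable \<pi> (\<lambda>y. if gap_total n y \<le> real N then y i ^ (m + 2) / (m + 2) else 0)"
proof (rule \<pi>.integrable_const_bound[where B="real N ^ (m + 2) / (m + 2)"])
  show "AE y in \<pi>. norm (if gap_total n y \<le> real N then y i ^ (m + 2) / (m + 2) else 0)
      \<le> real N ^ (m + 2) / (m + 2)"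
    using AE_gap_nonneg
  proof eventually_elim
    case (elim y)
    note bounds = gap_nonneg_bounds[OF elim i]
    have "gap_total n y \<le> real N \<Longrightarrow> y i ^ (m + 2) \<le> real N ^ (m + 2)"
      using bounds by (intro power_mono) auto
    then show ?case
      using bounds by (auto intro: divide_right_mono)
  qed
qed (use gap_component_measurable_\<pi>[OF i] in measurable)

lemma truncated_moment_cutoff_le:
  assumes "integrable \<pi> (\<lambda>y. gap_total n y ^ m)" "integrable \<theta> (\<lambda>z. z ^ Suc m)"
    and i: "i \<in> {1..<n}" and "N \<le> M"
  shows "(\<integral>y. (if gap_total n y \<le> real N then y i ^ (m + 2) / (m + 2) else 0) \<partial>\<pi>)
    \<le> real (Suc m) * 2 ^ m * ((\<integral>y. gap_total n y ^ m \<partial>\<pi>) * (\<integral>z. z \<partial>\<theta>) + (\<integral>z. z ^ Suc m \<partial>\<theta>))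
      + real N ^ Suc m * (\<pi>.prob {y \<in> space \<pi>. real M < gap_total n y} + \<theta>.prob {real M<..})"
    (is "integral\<^sup>L \<pi> ?T \<le> _")
proof -
  define B where "B = real N ^ Suc m"
  define G where "G = partial_sum_test n i (2 * real M) (\<lambda>x. capped_power (real N) (Suc m) x - B)"
  define Q where "Q = {y \<in> space \<pi>. real M < gap_total n y}"
  have "sfl_test_fun n G"
    unfolding G_def using capped_power_bounds[of "real N" "Suc m"] i
    by (intro partial_sum_test_is_test_fun[where B=B]) (auto simp: B_def)
  then have integrable_gen: "integrable \<pi> (sfl_gen n \<theta> G)"
    and integral_gen: "integral\<^sup>L \<pi> (sfl_gen n \<theta> G) = 0"
    using stationary by (auto simp: sfl_stationary_def)
  have Q: "Q \<in> sets \<pi>"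
    unfolding Q_def by measurable
  then have integrable_Q: "integrable \<pi> (indicator Q :: _ \<Rightarrow> real)"
    by (intro \<pi>.integrable_const_bound[where B=1]) auto
  define R where "R y = real (Suc m) * 2 ^ m * (gap_total n y ^ m * (\<integral>z. z \<partial>\<theta>) + (\<integral>z. z ^ Suc m \<partial>\<theta>))
      + B * (indicator Q y + \<theta>.prob {real M<..}) - sfl_gen n \<theta> G y" for y
  have "AE y in \<pi>. ?T y \<le> R y"
    using AE_gap_nonneg
  proof (rule AE_mp[OF _ AE_I2], intro impI)
    fix y assume y: "gap_nonneg n y" "y \<in> space \<pi>"
    have "indicator {real M<..} (gap_total n y) = (indicator Q y :: real)"
      using y(2) by (simp add: Q_def indicator_def)
    then show "?T y \<le> R y"
      using sfl_gen_capped_test_le[OF prob_space_jump sets_jump jump_nonneg integrable_jump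
          assms(2) n_ge_2 i y(1), of "real N" "real M"] assms(4)
      unfolding R_def G_def B_def by simp
  qed
  then have "integral\<^sup>L \<pi> ?T \<le> integral\<^sup>L \<pi> R"
    using integrable_truncated_power[OF i] integrable_gen integrable_Q assms(1)
    by (intro integral_mono_AE) (auto simp: R_def[abs_def])
  also have "\<dots> = real (Suc m) * 2 ^ m * ((\<integral>y. gap_total n y ^ m \<partial>\<pi>) * (\<integral>z. z \<partial>\<theta>) + (\<integral>z. z ^ Suc m \<partial>\<theta>))
      + B * (\<pi>.prob Q + \<theta>.prob {real M<..})"
    using integrable_gen integral_gen integrable_Q assms(1) Q
    by (simp add: R_def[abs_def] \<pi>.prob_space algebra_simps)
  finally show ?thesis
    unfolding B_def Q_def .
qed

lemma truncated_moment_le: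
  assumes "integrable \<pi> (\<lambda>y. gap_total n y ^ m)" "integrable \<theta> (\<lambda>z. z ^ Suc m)"
    and "i \<in> {1..<n}"
  shows "(\<integral>y. (if gap_total n y \<le> real N then y i ^ (m + 2) / (m + 2) else 0) \<partial>\<pi>)
    \<le> real (Suc m) * 2 ^ m * ((\<integral>y. gap_total n y ^ m \<partial>\<pi>) * (\<integral>z. z \<partial>\<theta>) + (\<integral>z. z ^ Suc m \<partial>\<theta>))"
    (is "?I \<le> ?K")
proof -
  define tail where "tail M = \<pi>.prob {y \<in> space \<pi>. real M < gap_total n y} + \<theta>.prob {real M<..}" for M
  have "space \<theta> = UNIV"
    using sets_eq_imp_space_eq[OF sets_jump] by simp
  then have jump_tail: "(\<lambda>M. \<theta>.prob {real M<..}) \<longlonglongrightarrow> 0"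
    using \<theta>.measure_greater_tendsto_zero[of "\<lambda>z. z"]
    by (simp add: borel_measurable_jump greaterThan_def)
  have gap_tail: "(\<lambda>M. \<pi>.prob {y \<in> space \<pi>. real M < gap_total n y}) \<longlonglongrightarrow> 0"
    by (rule \<pi>.measure_greater_tendsto_zero) measurable
  have "tail \<longlonglongrightarrow> 0 + 0"
    unfolding tail_def by (rule tendsto_add[OF gap_tail jump_tail])
  then have "(\<lambda>M. ?K + real N ^ Suc m * tail M) \<longlonglongrightarrow> ?K + real N ^ Suc m * (0 + 0)"
    by (rule tendsto_add[OF tendsto_const tendsto_mult_left])
  then have "?I \<le> ?K + real N ^ Suc m * (0 + 0)"
    by (rule LIMSEQ_le_const) (use truncated_moment_cutoff_le[OF assms] in \<open>unfold tail_def, blast\<close>)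
  then show ?thesis
    by (simp only: add_0_right mult_zero_right)
qed

lemma integrable_gap_power_step:
  assumes "integrable \<pi> (\<lambda>y. gap_total n y ^ m)" "integrable \<theta> (\<lambda>z. z ^ Suc m)"
    and i: "i \<in> {1..<n}"
  shows "integrable \<pi> (\<lambda>y. y i ^ (m + 2))"
proof -
  note [measurable] = gap_component_measurable_\<pi>[OF i]
  have "integrable \<pi> (\<lambda>y. y i ^ (m + 2) / (m + 2))"
  proof (rule integrable_of_truncations_bounded[where w="gap_total n", OF _ _ _ _ truncated_moment_le[OF assms]])
    show "AE y in \<pi>. 0 \<le> y i ^ (m + 2) / (m + 2)"
      using AE_gap_nonneg by eventually_elim (simp add: gap_nonneg_bounds(1)[OF _ i])
    show "integrable \<pi> (\<lambda>y. if gap_total n y \<le> real N then y i ^ (m + 2) / (m + 2) else 0)" for N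
      by (rule integrable_truncated_power[OF i])
  qed measurable
  then show ?thesis
    unfolding divide_inverse integrable_mult_right_iff by simp
qed

lemma integrable_gap_total_power:
  assumes "integrable \<theta> (\<lambda>z. z ^ k)" "m < k"
  shows "integrable \<pi> (\<lambda>y. gap_total n y ^ m)"
  using assms(2)
proof (induction m)
  case (Suc m)
  have components: "integrable \<pi> (\<lambda>y. y i ^ (m + 2))" if "i \<in> {1..<n}" for i
    using Suc integrable_jump_power[OF assms(1), of "Suc m"] that
    by (intro integrable_gap_power_step) auto
  have "integrable \<pi> (\<lambda>y. gap_total n y ^ (m + 2))"
    unfolding gap_total_def
  proof (rule integrable_sum_power)
    show "{1..<n} \<noteq> {}"
      using n_ge_2 by auto
    show "AE y in \<pi>. \<forall>j\<in>{1..<n}. 0 \<le> y j"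
      using AE_gap_nonneg by (simp add: gap_nonneg_def)
  qed (use components in \<open>simp_all add: gap_component_measurable_\<pi>\<close>)
  then show ?case
  proof (rule \<pi>.integrable_power_mono)
    show "AE y in \<pi>. 0 \<le> gap_total n y"
      using AE_gap_nonneg
      by eventually_elim (auto simp: gap_total_def gap_nonneg_def intro: sum_nonneg)
  qed (simp_all add: gap_total_measurable_\<pi>)
qed simp

end

theorem theorem3p6:
  fixes n k :: nat and \<theta> :: "real measure" and \<pi> :: "(nat \<Rightarrow> real) measure"
  assumes "n \<ge> 2"
    and "prob_space \<theta>" and "sets \<theta> = sets borel"
    and "AE z in \<theta>. 0 < z"
    and "integrable \<theta> (\<lambda>z. z)" and "(\<integral>z. z \<partial>\<theta>) = 1"
    and "k \<ge> 1" and "integrable \<theta> (\<lambda>z. z ^ k)"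
    and "sfl_stationary n \<theta> \<pi>"
  shows "\<forall>i\<in>{1..<n}. integrable \<pi> (\<lambda>y. y i ^ (k + 1))"
proof -
  have "AE z in \<theta>. 0 \<le> z"
    using assms(4) by eventually_elim simp
  then interpret sfl_stationary_law n \<theta> \<pi>
    by (rule sfl_stationary_law.intro[OF assms(1-3) _ assms(5,9)])
  have "integrable \<pi> (\<lambda>y. gap_total n y ^ (k - 1))"
    using assms(7,8) by (intro integrable_gap_total_power[of k]) auto
  moreover have "integrable \<theta> (\<lambda>z. z ^ Suc (k - 1))"
    using assms(7,8) by simp
  ultimately have "integrable \<pi> (\<lambda>y. y i ^ (k - 1 + 2))" if "i \<in> {1..<n}" for i
    using that by (rule integrable_gap_power_step)
  moreover have "k - 1 + 2 = k + 1"
    using assms(7) by simp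
  ultimately show ?thesis
    by simp
qed

end
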